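(* Let $\mathbb{X}$ be a real Banach space such that $\operatorname{Sm}\mathbb{X}$ is a dense $G_\delta$ subset of $\mathbb{X}$, and let $U\subseteq\mathbb{X}$ be dense in $\mathbb{X}$. If a bounded linear operator $T:\mathbb{X}\to\mathbb{X}$ preserves Birkhoff–James orthogonality at each point of $U$, then $T$ is a scalar multiple of an isometry (there is $\lambda\ge0$ with $\|Tx\|=\lambda\|x\|$ for all $x$).
   Context: $u\perp_B v$ means $\|u+\lambda v\|\ge\|u\|$ for all real $\lambda$. $T$ preserves Birkhoff–James orthogonality at $x$ if $x\perp_B v$ implies $Tx\perp_B Tv$ for all $v$. For non-zero $z$, $J(z)=\{f\in\mathbb{X}^*:\|f\|=1,\ f(z)=\|z\|\}$; $z$ is smooth if $J(z)$ is a singleton; $\operatorname{Sm}\mathbb{X}$ is the set of smooth points. *)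

theory Defs
  imports "HOL-Analysis.Analysis"
begin

definition bj_orth :: "'a::real_normed_vector \<Rightarrow> 'a \<Rightarrow> bool" where
  "bj_orth u v \<longleftrightarrow> (\<forall>t::real. norm (u + t *\<^sub>R v) \<ge> norm u)"

definition preserves_bj_at :: "('a::real_normed_vector \<Rightarrow> 'b::real_normed_vector) \<Rightarrow> 'a \<Rightarrow> bool" where
  "preserves_bj_at T x \<longleftrightarrow> (\<forall>v. bj_orth x v \<longrightarrow> bj_orth (T x) (T v))"

definition supp_funcs :: "'a::real_normed_vector \<Rightarrow> ('a \<Rightarrow>\<^sub>L real) set" where
  "supp_funcs z = {f. norm f = 1 \<and> blinfun_apply f z = norm z}"

definition smooth_point :: "'a::real_normed_vector \<Rightarrow> bool" where
  "smooth_point z \<longleftrightarrow> z \<noteq> 0 \<and> (\<exists>f. supp_funcs z = {f})"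

definition smooth_points :: "'a::real_normed_vector set" where
  "smooth_points = {z. smooth_point z}"

end

theory Submission
  imports Defs
begin

text \<open>
  Let \<open>z \<in> U\<close> and let \<open>f\<close> be a Hahn--Banach functional norming \<open>z\<close> on \<open>span {z, y}\<close>. Then \<open>z\<close> is
  Birkhoff--James orthogonal to \<open>ker f\<close>, hence so is \<open>T z\<close> to \<open>T (ker f)\<close>, and this gives
  \<open>\<parallel>T (z + r y)\<parallel> \<ge> (\<parallel>T z\<parallel> / \<parallel>z\<parallel>) f (z + r y)\<close>, where \<open>r \<mapsto> f (z + r y) = \<parallel>z\<parallel> + r f y\<close> is a supporting
  line of the convex function \<open>r \<mapsto> \<parallel>z + r y\<parallel>\<close>. Since the slope \<open>f y\<close> ranges over the compact set
  \<open>[-\<parallel>y\<parallel>, \<parallel>y\<parallel>]\<close>, the existence of such a slope is a closed condition on \<open>z\<close>, so it holds at every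
  point. Along a segment avoiding \<open>0\<close>, the ratio \<open>\<parallel>T x\<parallel> / \<parallel>x\<parallel>\<close> can then drop between consecutive
  points of a partition only by a multiple of the defect of the supporting line; because the slopes
  of supporting lines of a convex function increase, these defects telescope to \<open>O(1/N)\<close>.
  So the ratio is constant.
\<close>

lemma linear_functional_vanishing_on_span:
  fixes v :: "'a::real_vector"
  assumes "v \<notin> span S"
  shows "\<exists>p. linear p \<and> (\<forall>x\<in>span S. p x = 0) \<and> p v = (1::real)"
proof -
  obtain B where B: "B \<subseteq> span S" "independent B" "span S \<subseteq> span B"
    using basis_exists[of "span S"] by metis
  have span_B: "span B = span S"
    using B by (metis span_minimal subspace_span subset_antisym)
  have v: "v \<notin> span B" using assms span_B by simp
  obtain p where p: "linear p" "\<forall>x\<in>insert v B. p x = (if x = v then 1 else (0::real))"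
    using linear_independent_extend[OF independent_insertI[OF v B(2)], of "\<lambda>x. if x = v then 1 else 0"]
    by blast
  have "p x = 0" if "x \<in> B" for x
    using p(2) v that span_base by fastforce
  then have "\<forall>x\<in>span B. p x = 0"
    using linear_eq_0_on_span[OF p(1)] by blast
  then show ?thesis using p span_B by auto
qed

lemma norm_dominated_extension_constant:
  fixes f :: "'a::real_normed_vector \<Rightarrow> real"
  assumes f: "linear f" and dom: "\<forall>x\<in>span S. f x \<le> norm x"
  shows "\<exists>d. (\<forall>u\<in>span S. f u - norm (u - v) \<le> d) \<and> (\<forall>w\<in>span S. d \<le> norm (w + v) - f w)"
proof -
  have gap: "f u - norm (u - v) \<le> norm (w + v) - f w" if "u \<in> span S" "w \<in> span S" for u w
  proof -
    have "f u + f w \<le> norm (u + w)"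
      using dom that by (simp add: span_add linear_add[OF f, symmetric])
    also have "\<dots> \<le> norm (u - v) + norm (w + v)"
      using norm_triangle_ineq[of "u - v" "w + v"] by simp
    finally show ?thesis by simp
  qed
  have "bdd_above ((\<lambda>u. f u - norm (u - v)) ` span S)"
    using gap[OF _ span_zero] by (auto intro!: bdd_aboveI2)
  then show ?thesis
    using gap span_zero by (intro exI[of _ "SUP u\<in>span S. f u - norm (u - v)"]) (auto intro!: cSUP_upper cSUP_least)
qed

lemma norm_dominated_extension_bound:
  fixes f :: "'a::real_normed_vector \<Rightarrow> real"
  assumes f: "linear f" and dom: "\<forall>x\<in>span S. f x \<le> norm x"
    and d_lower: "\<forall>u\<in>span S. f u - norm (u - v) \<le> d"
    and d_upper: "\<forall>w\<in>span S. d \<le> norm (w + v) - f w"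
    and w: "w \<in> span S"
  shows "f w + k * d \<le> norm (w + k *\<^sub>R v)"
proof -
  consider "k = 0" | "k > 0" | "k < 0" by linarith
  then show ?thesis
  proof cases
    case 1
    then show ?thesis using dom w by simp
  next
    case 2
    have "k * d \<le> k * (norm ((1 / k) *\<^sub>R w + v) - f ((1 / k) *\<^sub>R w))"
      using d_upper w 2 by (simp add: span_scale mult_left_mono)
    also have "\<dots> = norm (k *\<^sub>R ((1 / k) *\<^sub>R w + v)) - k * f ((1 / k) *\<^sub>R w)"
      using 2 by (simp add: right_diff_distrib)
    also have "\<dots> = norm (w + k *\<^sub>R v) - f w"
      using 2 by (simp add: linear_scale[OF f] scaleR_add_right)
    finally show ?thesis by simp
  next
    case 3
    have "-k * (f (- (1 / k) *\<^sub>R w) - norm (- (1 / k) *\<^sub>R w - v)) \<le> -k * d"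
      using d_lower w 3 by (simp add: span_neg span_scale mult_left_mono)
    also have "-k * (f (- (1 / k) *\<^sub>R w) - norm (- (1 / k) *\<^sub>R w - v))
        = -k * f (- (1 / k) *\<^sub>R w) - norm (-k *\<^sub>R (- (1 / k) *\<^sub>R w - v))"
      using 3 by (simp add: right_diff_distrib)
    also have "\<dots> = f w - norm (w + k *\<^sub>R v)"
      using 3 by (simp add: linear_scale[OF f] linear_neg[OF f] scaleR_diff_right)
    finally show ?thesis by simp
  qed
qed

lemma norm_dominated_extension_step:
  fixes f :: "'a::real_normed_vector \<Rightarrow> real"
  assumes f: "linear f" and dom: "\<forall>x\<in>span S. f x \<le> norm x" and v: "v \<notin> span S"
  shows "\<exists>g. linear g \<and> (\<forall>x\<in>span S. g x = f x) \<and> (\<forall>x\<in>span (insert v S). g x \<le> norm x)"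
proof -
  obtain p where p: "linear p" "\<forall>x\<in>span S. p x = 0" "p v = (1::real)"
    using linear_functional_vanishing_on_span[OF v] by blast
  obtain d where d: "\<forall>u\<in>span S. f u - norm (u - v) \<le> d" "\<forall>w\<in>span S. d \<le> norm (w + v) - f w"
    using norm_dominated_extension_constant[OF f dom] by blast
  define g where "g x = f x + (d - f v) * p x" for x
  have "linear g"
    using f p(1) unfolding g_def linear_iff by (simp add: algebra_simps)
  moreover have "\<forall>x\<in>span S. g x = f x"
    using p(2) by (simp add: g_def)
  moreover have "g x \<le> norm x" if x: "x \<in> span (insert v S)" for x
  proof -
    obtain k where w: "x - k *\<^sub>R v \<in> span S"
      using x span_breakdown_eq by blast
    have "p (x - k *\<^sub>R v) = 0" using p(2) w by blast
    then have "p x = k"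
      using p(3) by (simp add: linear_diff[OF p(1)] linear_scale[OF p(1)])
    then have "g x = f (x - k *\<^sub>R v) + k * d"
      using f unfolding g_def by (simp add: linear_diff linear_scale algebra_simps)
    also have "\<dots> \<le> norm (x - k *\<^sub>R v + k *\<^sub>R v)"
      by (rule norm_dominated_extension_bound[OF f dom d w])
    finally show ?thesis by simp
  qed
  ultimately show ?thesis by blast
qed

lemma norm_dominated_extension:
  fixes f :: "'a::real_normed_vector \<Rightarrow> real"
  assumes "finite F" and "linear f" and "\<forall>x\<in>span S. f x \<le> norm x"
  shows "\<exists>g. linear g \<and> (\<forall>x\<in>span S. g x = f x) \<and> (\<forall>x\<in>span (F \<union> S). g x \<le> norm x)"
  using assms(1)
proof (induction F rule: finite_induct)
  case empty
  then show ?case using assms by auto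
next
  case (insert v F)
  then obtain g where g: "linear g" "\<forall>x\<in>span S. g x = f x" "\<forall>x\<in>span (F \<union> S). g x \<le> norm x"
    by blast
  show ?case
  proof (cases "v \<in> span (F \<union> S)")
    case True
    then have "span (insert v F \<union> S) = span (F \<union> S)"
      using span_redundant by simp
    then show ?thesis using g by auto
  next
    case False
    then obtain h where h: "linear h" "\<forall>x\<in>span (F \<union> S). h x = g x"
        "\<forall>x\<in>span (insert v (F \<union> S)). h x \<le> norm x"
      using norm_dominated_extension_step[OF g(1,3)] by blast
    have "span S \<subseteq> span (F \<union> S)" by (rule span_mono) auto
    then show ?thesis using h g by (intro exI[of _ h]) auto
  qed
qed

lemma norming_functional_on_span:
  fixes z :: "'a::real_normed_vector"
  assumes "z \<noteq> 0" and "finite F"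
  shows "\<exists>f. linear f \<and> f z = norm z \<and> (\<forall>x\<in>span (insert z F). f x \<le> norm x)"
proof -
  have "z \<notin> span {}" using assms(1) by simp
  then obtain p where p: "linear p" "p z = (1::real)"
    using linear_functional_vanishing_on_span by blast
  define f where "f x = norm z * p x" for x
  have "linear f"
    using p(1) unfolding f_def linear_iff by (simp add: algebra_simps)
  moreover have "\<forall>x\<in>span {z}. f x \<le> norm x"
  proof
    fix x assume "x \<in> span {z}"
    then obtain c where "x = c *\<^sub>R z" by (auto simp: span_singleton)
    moreover have "f x = c * norm z"
      using p \<open>x = c *\<^sub>R z\<close> by (simp add: f_def linear_scale)
    ultimately show "f x \<le> norm x"
      by (simp add: mult_right_mono)
  qed
  ultimately obtain g where g: "linear g" "\<forall>x\<in>span {z}. g x = f x" "\<forall>x\<in>span (F \<union> {z}). g x \<le> norm x"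
    using norm_dominated_extension[OF assms(2)] by blast
  moreover have "g z = norm z"
    using g(2) p(2) span_base[of z "{z}"] by (simp add: f_def)
  ultimately show ?thesis by auto
qed

lemma bj_orth_norm_scaleR_add_ge:
  assumes "bj_orth u v"
  shows "\<bar>c\<bar> * norm u \<le> norm (c *\<^sub>R u + v)"
proof (cases "c = 0")
  case False
  have "norm u \<le> norm (u + (1 / c) *\<^sub>R v)"
    using assms unfolding bj_orth_def by blast
  also have "\<bar>c\<bar> * norm (u + (1 / c) *\<^sub>R v) = norm (c *\<^sub>R u + v)"
    using False by (simp flip: norm_scaleR add: scaleR_add_right)
  finally show ?thesis using False by (simp add: mult_left_mono)
qed simp

lemma bj_orth_kernel_of_norming_functional:
  assumes "subspace E" "z \<in> E" "h \<in> E" "linear f" "f z = norm z" "\<forall>x\<in>E. f x \<le> norm x" "f h = 0"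
  shows "bj_orth z h"
  unfolding bj_orth_def
proof
  fix t :: real
  have "f (z + t *\<^sub>R h) = norm z"
    using assms by (simp add: linear_add linear_scale)
  then show "norm z \<le> norm (z + t *\<^sub>R h)"
    using assms by (metis subspace_add subspace_scale)
qed

lemma preserves_bj_at_norming_functional_le:
  fixes T :: "'a::real_normed_vector \<Rightarrow> 'b::real_normed_vector"
  assumes T: "linear T" and pres: "preserves_bj_at T z" and "z \<noteq> 0"
    and E: "subspace E" "z \<in> E" "w \<in> E"
    and f: "linear f" "f z = norm z" "\<forall>x\<in>E. f x \<le> norm x"
  shows "f w * norm (T z) \<le> norm z * norm (T w)"
proof -
  define c where "c = f w / norm z"
  define h where "h = w - c *\<^sub>R z"
  have "h \<in> E" using E by (simp add: h_def subspace_diff subspace_scale)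
  moreover have "f h = 0"
    using \<open>z \<noteq> 0\<close> f by (simp add: h_def c_def linear_diff linear_scale)
  ultimately have "bj_orth z h"
    using E f by (intro bj_orth_kernel_of_norming_functional)
  then have "bj_orth (T z) (T h)"
    using pres unfolding preserves_bj_at_def by blast
  then have "\<bar>c\<bar> * norm (T z) \<le> norm (T w)"
    using bj_orth_norm_scaleR_add_ge[of "T z" "T h" c] T
    by (simp add: h_def linear_diff linear_scale)
  then have "norm z * (c * norm (T z)) \<le> norm z * norm (T w)"
    by (intro mult_left_mono) (auto intro: order_trans[OF mult_right_mono[OF abs_ge_self]])
  then show ?thesis
    using \<open>z \<noteq> 0\<close> by (simp add: c_def)
qed

definition supporting_slope :: "('a::real_normed_vector \<Rightarrow> 'b::real_normed_vector) \<Rightarrow> 'a \<Rightarrow> 'a \<Rightarrow> real \<Rightarrow> bool" where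
  "supporting_slope T z y s \<longleftrightarrow> (\<forall>r::real. norm z + r * s \<le> norm (z + r *\<^sub>R y) \<and>
      norm (T z) * (norm z + r * s) \<le> norm z * norm (T (z + r *\<^sub>R y)))"

lemma supporting_slope_at_preserving_point:
  fixes T :: "'a::real_normed_vector \<Rightarrow> 'b::real_normed_vector"
  assumes T: "linear T" and pres: "preserves_bj_at T z"
  shows "\<exists>s\<in>{-norm y..norm y}. supporting_slope T z y s"
proof (cases "z = 0")
  case True
  then show ?thesis using linear_0[OF T] by (intro bexI[of _ 0]) (auto simp: supporting_slope_def)
next
  case False
  define E where "E = span {z, y}"
  obtain f where f: "linear f" "f z = norm z" "\<forall>x\<in>E. f x \<le> norm x"
    using norming_functional_on_span[OF False, of "{y}"] by (auto simp: E_def)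
  have E: "subspace E" "z \<in> E" "y \<in> E"
    by (simp_all add: E_def span_base)
  have "f y \<le> norm y" "- f y \<le> norm y"
    using f(3) E subspace_neg[OF E(1,3)] by (auto simp: linear_neg[OF f(1)])
  moreover have "supporting_slope T z y (f y)"
    unfolding supporting_slope_def
  proof
    fix r :: real
    have w: "z + r *\<^sub>R y \<in> E" and fw: "f (z + r *\<^sub>R y) = norm z + r * f y"
      using E f by (simp_all add: subspace_add subspace_scale linear_add linear_scale)
    show "norm z + r * f y \<le> norm (z + r *\<^sub>R y) \<and>
        norm (T z) * (norm z + r * f y) \<le> norm z * norm (T (z + r *\<^sub>R y))"
      using f(3)[rule_format, OF w] preserves_bj_at_norming_functional_le[OF T pres False E(1,2) w f]
      unfolding fw by (simp add: mult.commute)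
  qed
  ultimately show ?thesis by auto
qed

lemma closed_Collect_ex_compact:
  fixes C :: "('a::topological_space \<times> 'b::topological_space) set"
  assumes "compact K" and "closed C"
  shows "closed {x. \<exists>s\<in>K. (x, s) \<in> C}"
  unfolding closed_def
proof (rule Topological_Spaces.openI)
  fix x assume "x \<in> - {x. \<exists>s\<in>K. (x, s) \<in> C}"
  then have "{x} \<times> K \<subseteq> - C" by auto
  from Elementary_Topology.tube_lemma[OF assms(1) open_Compl[OF assms(2)] this]
  obtain X where X: "x \<in> X" "open X" "X \<times> K \<subseteq> - C" by blast
  then have "X \<subseteq> - {x. \<exists>s\<in>K. (x, s) \<in> C}" by auto
  with X show "\<exists>X. open X \<and> x \<in> X \<and> X \<subseteq> - {x. \<exists>s\<in>K. (x, s) \<in> C}" by blast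
qed

lemma closed_supporting_slope_set:
  fixes T :: "'a::real_normed_vector \<Rightarrow> 'b::real_normed_vector"
  assumes "bounded_linear T"
  shows "closed {z. \<exists>s\<in>{-norm y..norm y}. supporting_slope T z y s}"
proof -
  have "closed {(z, s). supporting_slope T z y s}"
    unfolding supporting_slope_def case_prod_beta
    by (intro closed_Collect_all closed_Collect_conj closed_Collect_le
        continuous_intros bounded_linear.continuous_on[OF assms])
  from closed_Collect_ex_compact[OF compact_Icc this] show ?thesis
    by simp
qed

lemma supporting_slope_everywhere:
  fixes T :: "'a::real_normed_vector \<Rightarrow> 'b::real_normed_vector"
  assumes T: "bounded_linear T" and dense: "closure U = UNIV" and pres: "\<forall>x\<in>U. preserves_bj_at T x"
  shows "\<exists>s. supporting_slope T z y s"
proof -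
  have "U \<subseteq> {z. \<exists>s\<in>{-norm y..norm y}. supporting_slope T z y s}"
    using pres supporting_slope_at_preserving_point[OF bounded_linear.linear[OF T]] by blast
  then have "closure U \<subseteq> {z. \<exists>s\<in>{-norm y..norm y}. supporting_slope T z y s}"
    by (rule closure_minimal[OF _ closed_supporting_slope_set[OF T]])
  then show ?thesis using dense by blast
qed

lemma ratio_drop_le_defect:
  fixes \<phi>t \<phi>u \<psi>t \<psi>u h s m B :: real
  assumes "0 < m" "m \<le> \<phi>t" "m \<le> \<phi>u" "0 \<le> \<psi>t" "\<psi>t \<le> B * \<phi>t"
    and "\<phi>t + h * s \<le> \<phi>u" "\<psi>t * (\<phi>t + h * s) \<le> \<phi>t * \<psi>u"
  shows "\<psi>t / \<phi>t - B * (\<phi>u - \<phi>t - h * s) / m \<le> \<psi>u / \<phi>u"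
proof -
  define \<rho> where "\<rho> = \<psi>t / \<phi>t"
  define d where "d = \<phi>u - \<phi>t - h * s"
  have "0 < \<phi>t" "0 < \<phi>u" "0 \<le> d" using assms by (simp_all add: d_def)
  have "\<rho> * (\<phi>u - d) \<le> \<psi>u"
    using assms(7) \<open>0 < \<phi>t\<close> by (simp add: \<rho>_def d_def pos_divide_le_eq mult.commute)
  have "0 \<le> \<rho>" "\<rho> \<le> B"
    using assms(4,5) \<open>0 < \<phi>t\<close> by (simp_all add: \<rho>_def pos_divide_le_eq)
  have "\<rho> * d / \<phi>u \<le> \<rho> * d / m"
    using \<open>0 \<le> \<rho>\<close> \<open>0 \<le> d\<close> assms(1,3) by (intro divide_left_mono) auto
  also have "\<dots> \<le> B * d / m"
    using \<open>\<rho> \<le> B\<close> \<open>0 \<le> d\<close> assms(1) by (intro divide_right_mono mult_right_mono) auto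
  finally have "\<rho> - B * d / m \<le> \<rho> * (\<phi>u - d) / \<phi>u"
    using \<open>0 < \<phi>u\<close> by (simp add: diff_divide_distrib right_diff_distrib)
  also have "\<dots> \<le> \<psi>u / \<phi>u"
    using \<open>\<rho> * (\<phi>u - d) \<le> \<psi>u\<close> \<open>0 < \<phi>u\<close> by (intro divide_right_mono) auto
  finally show ?thesis by (simp add: \<rho>_def d_def)
qed

lemma ratio_le_of_supporting_slopes_partition:
  fixes \<phi> \<psi> \<sigma> :: "real \<Rightarrow> real"
  assumes "0 < m"
    and bounds: "\<forall>t\<in>{0..1}. m \<le> \<phi> t \<and> 0 \<le> \<psi> t \<and> \<psi> t \<le> B * \<phi> t"
    and slope: "\<forall>t\<in>{0..1}. \<forall>u\<in>{0..1}.
      \<phi> t + (u - t) * \<sigma> t \<le> \<phi> u \<and> \<psi> t * (\<phi> t + (u - t) * \<sigma> t) \<le> \<phi> t * \<psi> u"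
    and "N > 0"
  shows "\<psi> 0 / \<phi> 0 - B * (\<sigma> 1 - \<sigma> 0) / m / real N \<le> \<psi> 1 / \<phi> 1"
proof -
  define \<rho> where "\<rho> t = \<psi> t / \<phi> t" for t
  define t where "t k = real k / real N" for k
  have "0 < \<phi> 0" "0 \<le> B * \<phi> 0"
    using bounds \<open>0 < m\<close> by (auto dest!: bspec[of _ _ 0])
  then have "B \<ge> 0" by (simp add: zero_le_mult_iff)
  have t_in: "t k \<in> {0..1}" if "k \<le> N" for k
    using that \<open>N > 0\<close> by (simp add: t_def)
  have t_Suc: "t (Suc k) - t k = 1 / real N" for k
    by (simp add: t_def diff_divide_distrib[symmetric])
  have ends: "t 0 = 0" "t N = 1"
    using \<open>N > 0\<close> by (simp_all add: t_def)
  have drop: "\<rho> (t k) - \<rho> (t (Suc k))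
      \<le> B * (\<phi> (t (Suc k)) - \<phi> (t k) - (t (Suc k) - t k) * \<sigma> (t k)) / m" if "k < N" for k
  proof -
    have "t k \<in> {0..1}" "t (Suc k) \<in> {0..1}" using t_in that by simp_all
    then have "\<rho> (t k) - B * (\<phi> (t (Suc k)) - \<phi> (t k) - (t (Suc k) - t k) * \<sigma> (t k)) / m
        \<le> \<rho> (t (Suc k))"
      unfolding \<rho>_def using bounds slope by (intro ratio_drop_le_defect[OF \<open>0 < m\<close>]) auto
    then show ?thesis by linarith
  qed
  have defect: "\<phi> (t (Suc k)) - \<phi> (t k) - (t (Suc k) - t k) * \<sigma> (t k)
      \<le> (\<sigma> (t (Suc k)) - \<sigma> (t k)) / real N" if "k < N" for k
  proof -
    have "\<phi> (t (Suc k)) + (t k - t (Suc k)) * \<sigma> (t (Suc k)) \<le> \<phi> (t k)"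
      using slope t_in[of k] t_in[of "Suc k"] that by auto
    moreover have "t k - t (Suc k) = - (1 / real N)" using t_Suc[of k] by simp
    ultimately show ?thesis
      unfolding t_Suc diff_divide_distrib by simp
  qed
  have "\<rho> 0 - \<rho> 1 = (\<Sum>k<N. \<rho> (t k) - \<rho> (t (Suc k)))"
    using sum_lessThan_telescope'[of "\<lambda>k. \<rho> (t k)" N] by (simp add: ends)
  also have "\<dots> \<le> (\<Sum>k<N. B * ((\<sigma> (t (Suc k)) - \<sigma> (t k)) / real N) / m)"
    using drop defect \<open>B \<ge> 0\<close> \<open>0 < m\<close>
    by (intro sum_mono order_trans[OF drop] divide_right_mono mult_left_mono) auto
  also have "\<dots> = B * (\<sigma> 1 - \<sigma> 0) / m / real N"
    unfolding sum_divide_distrib[symmetric] sum_distrib_left[symmetric]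
    by (simp add: sum_lessThan_telescope[of "\<lambda>k. \<sigma> (t k)"] ends mult.commute)
  finally show ?thesis by (simp add: \<rho>_def)
qed

lemma ratio_le_of_supporting_slopes:
  fixes \<phi> \<psi> \<sigma> :: "real \<Rightarrow> real"
  assumes "0 < m"
    and "\<forall>t\<in>{0..1}. m \<le> \<phi> t \<and> 0 \<le> \<psi> t \<and> \<psi> t \<le> B * \<phi> t"
    and "\<forall>t\<in>{0..1}. \<forall>u\<in>{0..1}.
      \<phi> t + (u - t) * \<sigma> t \<le> \<phi> u \<and> \<psi> t * (\<phi> t + (u - t) * \<sigma> t) \<le> \<phi> t * \<psi> u"
  shows "\<psi> 0 / \<phi> 0 \<le> \<psi> 1 / \<phi> 1"
proof (rule LIMSEQ_le_const2)
  show "(\<lambda>N. \<psi> 0 / \<phi> 0 - B * (\<sigma> 1 - \<sigma> 0) / m / real N) \<longlonglongrightarrow> \<psi> 0 / \<phi> 0"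
    by (intro tendsto_eq_intros lim_const_over_n) auto
  show "\<exists>N. \<forall>n\<ge>N. \<psi> 0 / \<phi> 0 - B * (\<sigma> 1 - \<sigma> 0) / m / real n \<le> \<psi> 1 / \<phi> 1"
    using ratio_le_of_supporting_slopes_partition[OF assms] by (intro exI[of _ 1]) auto
qed

lemma norm_ratio_scaleR:
  assumes "linear T" and "c \<noteq> 0"
  shows "norm (T (c *\<^sub>R a)) / norm (c *\<^sub>R a) = norm (T a) / norm a"
  using assms by (simp add: linear_scale)

lemma norm_ratio_le_off_zero_segment:
  fixes T :: "'a::real_normed_vector \<Rightarrow> 'b::real_normed_vector"
  assumes T: "bounded_linear T" and dense: "closure U = UNIV" and pres: "\<forall>x\<in>U. preserves_bj_at T x"
    and "0 \<notin> closed_segment a b"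
  shows "norm (T a) / norm a \<le> norm (T b) / norm b"
proof -
  define p where "p t = (1 - t) *\<^sub>R a + t *\<^sub>R b" for t
  have p_segment: "p t \<in> closed_segment a b" if "t \<in> {0..1}" for t
    using that by (auto simp: p_def in_segment)
  have p_shift: "p t + (u - t) *\<^sub>R (b - a) = p u" for t u
    by (simp add: p_def algebra_simps)
  have "continuous_on {0..1} (\<lambda>t. norm (p t))"
    unfolding p_def by (intro continuous_intros)
  from continuous_attains_inf[OF compact_Icc _ this]
  obtain t0 where t0: "t0 \<in> {0..1}" "\<forall>t\<in>{0..1}. norm (p t0) \<le> norm (p t)"
    by auto
  have "0 < norm (p t0)" using assms(4) p_segment[OF t0(1)] by auto
  obtain K where K: "\<forall>x. norm (T x) \<le> norm x * K"
    using bounded_linear.bounded[OF T] by blast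
  have "\<forall>t. \<exists>s. supporting_slope T (p t) (b - a) s"
    using supporting_slope_everywhere[OF T dense pres] by blast
  from choice[OF this] obtain \<sigma> where \<sigma>: "\<forall>t. supporting_slope T (p t) (b - a) (\<sigma> t)"
    by blast
  have "norm (T (p 0)) / norm (p 0) \<le> norm (T (p 1)) / norm (p 1)"
  proof (rule ratio_le_of_supporting_slopes[OF \<open>0 < norm (p t0)\<close>])
    show "\<forall>t\<in>{0..1}. norm (p t0) \<le> norm (p t) \<and> 0 \<le> norm (T (p t)) \<and> norm (T (p t)) \<le> K * norm (p t)"
      using t0(2) K by (simp add: mult.commute)
    have "norm (p t) + (u - t) * \<sigma> t \<le> norm (p u) \<and>
        norm (T (p t)) * (norm (p t) + (u - t) * \<sigma> t) \<le> norm (p t) * norm (T (p u))" for t u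
      using \<sigma>[unfolded supporting_slope_def, rule_format, of t "u - t"] unfolding p_shift .
    then show "\<forall>t\<in>{0..1}. \<forall>u\<in>{0..1}. norm (p t) + (u - t) * \<sigma> t \<le> norm (p u) \<and>
        norm (T (p t)) * (norm (p t) + (u - t) * \<sigma> t) \<le> norm (p t) * norm (T (p u))"
      by blast
  qed
  then show ?thesis by (simp add: p_def)
qed

lemma norm_ratio_le:
  fixes T :: "'a::real_normed_vector \<Rightarrow> 'b::real_normed_vector"
  assumes T: "bounded_linear T" and dense: "closure U = UNIV" and pres: "\<forall>x\<in>U. preserves_bj_at T x"
    and "a \<noteq> 0" "b \<noteq> 0"
  shows "norm (T a) / norm a \<le> norm (T b) / norm b"
proof (cases "0 \<in> closed_segment a b")
  case True
  then obtain u where u: "0 \<le> u" "u \<le> 1" "(1 - u) *\<^sub>R a + u *\<^sub>R b = 0"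
    by (auto simp: in_segment)
  then have "u \<noteq> 0" "u \<noteq> 1" using \<open>a \<noteq> 0\<close> \<open>b \<noteq> 0\<close> by auto
  have "u *\<^sub>R b = - ((1 - u) *\<^sub>R a)"
    using u(3) by (simp add: add_eq_0_iff)
  have "b = (1 / u) *\<^sub>R (u *\<^sub>R b)"
    using \<open>u \<noteq> 0\<close> by simp
  also have "\<dots> = ((u - 1) / u) *\<^sub>R a"
    unfolding \<open>u *\<^sub>R b = - ((1 - u) *\<^sub>R a)\<close> by (simp flip: scaleR_minus_left add: minus_divide_left)
  finally show ?thesis
    using norm_ratio_scaleR[OF bounded_linear.linear[OF T], of "(u - 1) / u" a] \<open>u \<noteq> 0\<close> \<open>u \<noteq> 1\<close>
    by simp
next
  case False
  then show ?thesis by (rule norm_ratio_le_off_zero_segment[OF T dense pres])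
qed

lemma norm_ratio_eq:
  fixes T :: "'a::real_normed_vector \<Rightarrow> 'b::real_normed_vector"
  assumes "bounded_linear T" and "closure U = UNIV" and "\<forall>x\<in>U. preserves_bj_at T x"
    and "a \<noteq> 0" "b \<noteq> 0"
  shows "norm (T a) / norm a = norm (T b) / norm b"
  using norm_ratio_le[OF assms] norm_ratio_le[OF assms(1-3,5,4)] by linarith

theorem mainTheorem7:
  fixes T :: "'a::banach \<Rightarrow> 'a" and U :: "'a set"
  assumes "gdelta_in euclidean (smooth_points :: 'a set)"
    and "closure (smooth_points :: 'a set) = UNIV"
    and "closure U = UNIV"
    and "bounded_linear T"
    and "\<forall>x\<in>U. preserves_bj_at T x"
  shows "\<exists>c::real. c \<ge> 0 \<and> (\<forall>x. norm (T x) = c * norm x)"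
proof -
  have T0: "T 0 = 0" using linear_0[OF bounded_linear.linear[OF assms(4)]] .
  obtain a :: 'a where a: "\<exists>x::'a. x \<noteq> 0 \<Longrightarrow> a \<noteq> 0" by blast
  define c where "c = norm (T a) / norm a"
  have "norm (T x) = c * norm x" for x
  proof (cases "x = 0")
    case False
    then have "norm (T x) / norm x = c"
      unfolding c_def using norm_ratio_eq[OF assms(4,3,5) False a] by blast
    then show ?thesis using False by (simp add: field_simps)
  qed (simp add: T0)
  moreover have "c \<ge> 0" by (simp add: c_def)
  ultimately show ?thesis by blast
qed

end
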